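(* Let $g(v;a)=v(1-v)(v-a)$, $k>0$, $a\in(0,1)$, $v_i=\frac{a+1}{3}$, and $A\in(v_i,1)$. Put $u_{tp}=\frac12(1+a-A)$. Then $u_{tp}\in(\frac a2,v_i)$, $$d^\diamond(A;a)=\frac{-3A^2+2(a+1)A+(a-1)^2}{4(k+1)}>0,$$ and the line $v\mapsto d^\diamond(A;a)(k+1)(A-v)-g(A;a)$ touches the graph of $v\mapsto -g(v;a)$ tangentially at $v=u_{tp}$ (equal values and equal derivatives there).
   Context: $d^\diamond(A;a)=\inf\{d>0:\ d(k+1)(A-v)-g(A;a)\ge -g(v;a)\ \text{for all }v\in[0,A]\}$. *)

theory Defs
  imports Complex_Main
begin

definition g :: "real \<Rightarrow> real \<Rightarrow> real" where
  "g v a = v * (1 - v) * (v - a)"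

definition d_diamond :: "real \<Rightarrow> real \<Rightarrow> real \<Rightarrow> real" where
  "d_diamond k A a = Inf {d. d > 0 \<and> (\<forall>v\<in>{0..A}. d * (k + 1) * (A - v) - g A a \<ge> - g v a)}"

end

theory Submission
  imports Defs
begin

text \<open>
  Since \<open>g\<close> is a cubic, \<open>g A a - g v a = (A - v) s(v)\<close> with a quadratic chord slope \<open>s\<close>,
  which attains its maximum \<open>(-3A\<^sup>2 + 2(a + 1)A + (a - 1)\<^sup>2)/4\<close> at \<open>v = u\<^sub>t\<^sub>p\<close>.
  The admissibility condition in \<open>d\<^sup>\<diamond>\<close> says that \<open>d(k + 1)\<close> dominates \<open>s\<close> on \<open>[0, A)\<close>,
  so the infimum is this maximum divided by \<open>k + 1\<close>; at the maximiser of the chord slope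
  the chord slope equals the derivative of \<open>g\<close>, which is the tangency.
\<close>

definition g_chord_slope :: "real \<Rightarrow> real \<Rightarrow> real \<Rightarrow> real" where
  "g_chord_slope a A v = (1 + a) * (A + v) - (A^2 + A * v + v^2) - a"

lemma g_diff_eq_chord_slope: "g A a - g v a = (A - v) * g_chord_slope a A v"
  unfolding g_def g_chord_slope_def by (simp add: algebra_simps power2_eq_square)

lemma g_chord_slope_eq_max_minus_square:
  "g_chord_slope a A v
     = (-3 * A^2 + 2 * (a + 1) * A + (a - 1)^2) / 4 - (v - (1 + a - A) / 2)^2"
  unfolding g_chord_slope_def by (simp add: field_simps power2_eq_square)

lemma g_chord_slope_max_pos:
  fixes a A :: real
  assumes "A < 1" and "2 * a < 3 * A + 1"
  shows "0 < -3 * A^2 + 2 * (a + 1) * A + (a - 1)^2"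
proof -
  have "-3 * A^2 + 2 * (a + 1) * A + (a - 1)^2 = (1 - A) * (3 * A + 1 - 2 * a) + a^2"
    by (simp add: algebra_simps power2_eq_square)
  moreover have "0 < (1 - A) * (3 * A + 1 - 2 * a)"
    using assms by simp
  ultimately show ?thesis
    by (smt (verit) zero_le_power2)
qed

lemma g_chord_bound_iff_max_le:
  fixes a A c :: real
  assumes "A \<le> 1 + a" and "1 + a < 3 * A"
  shows "(\<forall>v\<in>{0..A}. g A a - g v a \<le> c * (A - v))
     \<longleftrightarrow> (-3 * A^2 + 2 * (a + 1) * A + (a - 1)^2) / 4 \<le> c"
    (is "?bound \<longleftrightarrow> ?max \<le> c")
proof
  define u where "u = (1 + a - A) / 2"
  have u: "u \<in> {0..A}" "u < A"
    using assms unfolding u_def by auto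
  assume ?bound
  then have "(A - u) * g_chord_slope a A u \<le> (A - u) * c"
    using u by (simp add: g_diff_eq_chord_slope mult.commute)
  then have "g_chord_slope a A u \<le> c"
    using u by simp
  then show "?max \<le> c"
    by (simp add: g_chord_slope_eq_max_minus_square u_def)
next
  assume max_le: "?max \<le> c"
  show ?bound
  proof
    fix v assume "v \<in> {0..A}"
    moreover have "g_chord_slope a A v \<le> c"
      using max_le zero_le_power2[of "v - (1 + a - A) / 2"]
      unfolding g_chord_slope_eq_max_minus_square by linarith
    ultimately have "(A - v) * g_chord_slope a A v \<le> (A - v) * c"
      by (intro mult_left_mono) auto
    then show "g A a - g v a \<le> c * (A - v)"
      by (simp add: g_diff_eq_chord_slope mult.commute)
  qed
qed

lemma d_diamond_eq:
  fixes k a A :: real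
  assumes "-1 < k" and "A \<le> 1 + a" and "1 + a < 3 * A"
    and "0 < -3 * A^2 + 2 * (a + 1) * A + (a - 1)^2"
  shows "d_diamond k A a = (-3 * A^2 + 2 * (a + 1) * A + (a - 1)^2) / (4 * (k + 1))"
proof -
  define m where "m = (-3 * A^2 + 2 * (a + 1) * A + (a - 1)^2) / 4"
  have k1: "0 < k + 1"
    using assms by simp
  have "{d. d > 0 \<and> (\<forall>v\<in>{0..A}. d * (k + 1) * (A - v) - g A a \<ge> - g v a)}
      = {d. d > 0 \<and> m \<le> d * (k + 1)}"
  proof (intro Collect_cong conj_cong refl)
    fix d
    have "(\<forall>v\<in>{0..A}. d * (k + 1) * (A - v) - g A a \<ge> - g v a)
        \<longleftrightarrow> (\<forall>v\<in>{0..A}. g A a - g v a \<le> d * (k + 1) * (A - v))"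
      by (simp add: algebra_simps)
    then show "(\<forall>v\<in>{0..A}. d * (k + 1) * (A - v) - g A a \<ge> - g v a) \<longleftrightarrow> m \<le> d * (k + 1)"
      using g_chord_bound_iff_max_le[OF assms(2,3), of "d * (k + 1)"] unfolding m_def by simp
  qed
  also have "\<dots> = {m / (k + 1)..}"
  proof -
    have "m / (k + 1) \<le> d \<longleftrightarrow> m \<le> d * (k + 1)" for d
      using k1 by (simp add: pos_divide_le_eq)
    moreover have "0 < m / (k + 1)"
      using k1 assms(4) unfolding m_def by simp
    ultimately show ?thesis
      by (auto intro: less_le_trans)
  qed
  finally show ?thesis
    unfolding d_diamond_def m_def by simp
qed

lemma g_has_real_derivative:
  "((\<lambda>v. g v a) has_real_derivative (2 * (1 + a) * v - 3 * v^2 - a)) (at v)"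
  unfolding g_def by (auto intro!: derivative_eq_intros simp: algebra_simps power2_eq_square)

theorem lemma7p1:
  fixes k a A :: real
  assumes "k > 0" and "0 < a" and "a < 1"
    and "(a + 1) / 3 < A" and "A < 1"
  defines "u \<equiv> (1 + a - A) / 2"
  shows "(a / 2 < u \<and> u < (a + 1) / 3)
    \<and> d_diamond k A a = (-3 * A^2 + 2 * (a + 1) * A + (a - 1)^2) / (4 * (k + 1))
    \<and> d_diamond k A a > 0
    \<and> d_diamond k A a * (k + 1) * (A - u) - g A a = - g u a
    \<and> ((\<lambda>v. d_diamond k A a * (k + 1) * (A - v) - g A a)
            has_real_derivative (- (d_diamond k A a * (k + 1)))) (at u)
    \<and> ((\<lambda>v. - g v a) has_real_derivative (- (d_diamond k A a * (k + 1)))) (at u)"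
proof -
  define m where "m = (-3 * A^2 + 2 * (a + 1) * A + (a - 1)^2) / 4"
  have m_pos: "0 < m"
    using g_chord_slope_max_pos[of A a] assms unfolding m_def by simp
  have d_eq: "d_diamond k A a = (-3 * A^2 + 2 * (a + 1) * A + (a - 1)^2) / (4 * (k + 1))"
    using d_diamond_eq[of k A a] m_pos assms unfolding m_def by simp
  then have d_times: "d_diamond k A a * (k + 1) = m"
    using assms unfolding m_def by (simp add: field_simps)
  have d_pos: "d_diamond k A a > 0"
    using d_eq m_pos assms unfolding m_def by simp
  have u_range: "a / 2 < u \<and> u < (a + 1) / 3"
    using assms unfolding u_def by simp
  have "g_chord_slope a A u = m"
    by (simp add: g_chord_slope_eq_max_minus_square m_def u_def)
  then have touch: "m * (A - u) - g A a = - g u a"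
    using g_diff_eq_chord_slope[of A a u] by (simp add: mult.commute)
  have line_deriv: "((\<lambda>v. m * (A - v) - g A a) has_real_derivative - m) (at u)"
    by (auto intro!: derivative_eq_intros)
  have "((\<lambda>v. - g v a) has_real_derivative - (2 * (1 + a) * u - 3 * u^2 - a)) (at u)"
    using g_has_real_derivative by (rule DERIV_minus)
  moreover have "2 * (1 + a) * u - 3 * u^2 - a = m"
    unfolding m_def u_def by (simp add: field_simps power2_eq_square)
  ultimately have g_deriv: "((\<lambda>v. - g v a) has_real_derivative - m) (at u)"
    by metis
  show ?thesis
    unfolding d_times using u_range d_eq d_pos touch line_deriv g_deriv by blast
qed

end
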